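(* Let $H$ be a finitely generated residually finite group and let $(Y,H)$ be a free $H$-odometer. Suppose a free dynamical system $(X,G)$, with $X$ a Cantor set and $G$ a countable group, is continuously orbit equivalent to $(Y,H)$. Then $(X,G)$ is topologically conjugate to a free $G$-odometer which is structurally conjugate to $(Y,H)$. In particular $G$ and $H$ have isomorphic subgroups of the same finite index.
   Context: Free: $g\cdot x=x$ implies $g=e$. $G$-odometer: for a decreasing sequence $G_0\supseteq G_1\supseteq\cdots$ of finite-index subgroups of $G$ (not necessarily normal), the inverse limit $\varprojlim(G/G_n,\pi_n)$ of left coset spaces under the natural maps $\pi_n:G/G_n\to G/G_{n-1}$, with $G$ acting by left multiplication coordinatewise; we say $\{G_n\}$ determines a system if the system is conjugate to this odometer. Continuous orbit equivalence of $(X,G)$ and $(Y,H)$: a homeomorphism $\psi:X\to Y$ with $\psi(G\cdot x)=H\cdot\psi(x)$ for all $x$, such that for every $x\in X$, $g\in G$ there are $h\in H$ and a clopen neighborhood $U$ of $x$ with $\psi(g\cdot z)=h\cdot\psi(z)$ for $z\in U$, and symmetrically for $\psi^{-1}$. Structural conjugacy of odometers $(X,G)$ and $(Y,H)$: there exist decreasing sequences of finite-index subgroups $\{G_n\}_{n\ge0}$ of $G$ and $\{H_n\}_{n\ge0}$ of $H$ determining $(X,G)$ and $(Y,H)$ respectively, and a group isomorphism $\theta:H_0\to G_0$ with $\theta(H_n)=G_n$ for all $n\ge0$ and $[G:G_0]=[H:H_0]<\infty$. *)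

theory Defs
  imports "HOL-Analysis.Analysis" "HOL-Algebra.Algebra"
begin

definition group_action_top :: "('g,'b) monoid_scheme \<Rightarrow> 'x topology \<Rightarrow> ('g \<Rightarrow> 'x \<Rightarrow> 'x) \<Rightarrow> bool" where
  "group_action_top G T a \<longleftrightarrow> group G
     \<and> (\<forall>g\<in>carrier G. continuous_map T T (a g))
     \<and> (\<forall>x\<in>topspace T. a \<one>\<^bsub>G\<^esub> x = x)
     \<and> (\<forall>g\<in>carrier G. \<forall>h\<in>carrier G. \<forall>x\<in>topspace T. a (g \<otimes>\<^bsub>G\<^esub> h) x = a g (a h x))"

definition free_action :: "('g,'b) monoid_scheme \<Rightarrow> 'x topology \<Rightarrow> ('g \<Rightarrow> 'x \<Rightarrow> 'x) \<Rightarrow> bool" where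
  "free_action G T a \<longleftrightarrow> (\<forall>g\<in>carrier G. \<forall>x\<in>topspace T. a g x = x \<longrightarrow> g = \<one>\<^bsub>G\<^esub>)"

definition orbit_of :: "('g,'b) monoid_scheme \<Rightarrow> ('g \<Rightarrow> 'x \<Rightarrow> 'x) \<Rightarrow> 'x \<Rightarrow> 'x set" where
  "orbit_of G a x = (\<lambda>g. a g x) ` carrier G"

definition cantor_space :: "'x topology \<Rightarrow> bool" where
  "cantor_space T \<longleftrightarrow> T homeomorphic_space product_topology (\<lambda>_::nat. discrete_topology {0::nat, 1}) UNIV"

definition top_conjugate :: "('g,'b) monoid_scheme \<Rightarrow> 'x topology \<Rightarrow> ('g \<Rightarrow> 'x \<Rightarrow> 'x)
     \<Rightarrow> 'y topology \<Rightarrow> ('g \<Rightarrow> 'y \<Rightarrow> 'y) \<Rightarrow> bool" where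
  "top_conjugate G T a T' a' \<longleftrightarrow> (\<exists>\<phi>. homeomorphic_map T T' \<phi>
       \<and> (\<forall>g\<in>carrier G. \<forall>x\<in>topspace T. \<phi> (a g x) = a' g (\<phi> x)))"

definition fi_chain :: "('g,'b) monoid_scheme \<Rightarrow> (nat \<Rightarrow> 'g set) \<Rightarrow> bool" where
  "fi_chain G Gs \<longleftrightarrow> (\<forall>n. subgroup (Gs n) G \<and> finite (lcosets\<^bsub>G\<^esub> (Gs n)) \<and> Gs (Suc n) \<subseteq> Gs n)"

text \<open>The odometer: inverse limit of the left coset spaces G/G_n (discrete) under the natural
  maps gG_{n+1} \<mapsto> gG_n (i.e. compatible sequences x_{n+1} \<subseteq> x_n), as a subspace of the product.\<close>
definition odo_space :: "('g,'b) monoid_scheme \<Rightarrow> (nat \<Rightarrow> 'g set) \<Rightarrow> (nat \<Rightarrow> 'g set) topology" where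
  "odo_space G Gs = subtopology (product_topology (\<lambda>n. discrete_topology (lcosets\<^bsub>G\<^esub> (Gs n))) UNIV)
                      {x. \<forall>n. x (Suc n) \<subseteq> x n}"

definition odo_act :: "('g,'b) monoid_scheme \<Rightarrow> 'g \<Rightarrow> (nat \<Rightarrow> 'g set) \<Rightarrow> (nat \<Rightarrow> 'g set)" where
  "odo_act G g x = (\<lambda>n. g <#\<^bsub>G\<^esub> x n)"

definition determines :: "('g,'b) monoid_scheme \<Rightarrow> (nat \<Rightarrow> 'g set) \<Rightarrow> 'x topology \<Rightarrow> ('g \<Rightarrow> 'x \<Rightarrow> 'x) \<Rightarrow> bool" where
  "determines G Gs T a \<longleftrightarrow> fi_chain G Gs \<and> top_conjugate G T a (odo_space G Gs) (odo_act G)"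

definition is_odometer :: "('g,'b) monoid_scheme \<Rightarrow> 'x topology \<Rightarrow> ('g \<Rightarrow> 'x \<Rightarrow> 'x) \<Rightarrow> bool" where
  "is_odometer G T a \<longleftrightarrow> (\<exists>Gs. determines G Gs T a)"

definition struct_conjugate :: "('g,'b) monoid_scheme \<Rightarrow> 'x topology \<Rightarrow> ('g \<Rightarrow> 'x \<Rightarrow> 'x)
     \<Rightarrow> ('h,'c) monoid_scheme \<Rightarrow> 'y topology \<Rightarrow> ('h \<Rightarrow> 'y \<Rightarrow> 'y) \<Rightarrow> bool" where
  "struct_conjugate G T a H T' b \<longleftrightarrow> (\<exists>Gs Hs \<theta>. determines G Gs T a \<and> determines H Hs T' b
      \<and> \<theta> \<in> iso (H\<lparr>carrier := Hs 0\<rparr>) (G\<lparr>carrier := Gs 0\<rparr>)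
      \<and> (\<forall>n. \<theta> ` Hs n = Gs n)
      \<and> finite (lcosets\<^bsub>G\<^esub> (Gs 0)) \<and> card (lcosets\<^bsub>G\<^esub> (Gs 0)) = card (lcosets\<^bsub>H\<^esub> (Hs 0)))"

definition cont_orbit_equiv :: "('g,'b) monoid_scheme \<Rightarrow> 'x topology \<Rightarrow> ('g \<Rightarrow> 'x \<Rightarrow> 'x)
     \<Rightarrow> ('h,'c) monoid_scheme \<Rightarrow> 'y topology \<Rightarrow> ('h \<Rightarrow> 'y \<Rightarrow> 'y) \<Rightarrow> bool" where
  "cont_orbit_equiv G T a H T' b \<longleftrightarrow> (\<exists>\<psi> \<psi>'. homeomorphic_maps T T' \<psi> \<psi>'
     \<and> (\<forall>x\<in>topspace T. \<psi> ` orbit_of G a x = orbit_of H b (\<psi> x))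
     \<and> (\<forall>x\<in>topspace T. \<forall>g\<in>carrier G. \<exists>h\<in>carrier H. \<exists>U. openin T U \<and> closedin T U \<and> x \<in> U
            \<and> (\<forall>z\<in>U. \<psi> (a g z) = b h (\<psi> z)))
     \<and> (\<forall>y\<in>topspace T'. \<forall>h\<in>carrier H. \<exists>g\<in>carrier G. \<exists>V. openin T' V \<and> closedin T' V \<and> y \<in> V
            \<and> (\<forall>w\<in>V. \<psi>' (b h w) = a g (\<psi>' w))))"

definition finitely_generated :: "('g,'b) monoid_scheme \<Rightarrow> bool" where
  "finitely_generated G \<longleftrightarrow> (\<exists>S. finite S \<and> S \<subseteq> carrier G \<and> generate G S = carrier G)"

definition residually_finite :: "('g,'b) monoid_scheme \<Rightarrow> bool" where
  "residually_finite G \<longleftrightarrow> (\<forall>g\<in>carrier G. g \<noteq> \<one>\<^bsub>G\<^esub> \<longrightarrow>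
      (\<exists>N. N \<lhd> G \<and> finite (rcosets\<^bsub>G\<^esub> N) \<and> g \<notin> N))"

end

theory Submission
  imports Defs
begin

text \<open>Let \<open>\<psi> : Y \<rightarrow> X\<close> be the inverse of the orbit equivalence. Freeness of the
  \<open>G\<close>-action gives a cocycle \<open>c : H \<times> Y \<rightarrow> G\<close> with \<open>\<psi> (h \<cdot> y) = c(h, y) \<cdot> \<psi> y\<close>, and
  continuity of the orbit equivalence makes each \<open>c(h, -)\<close> locally constant. As \<open>Y\<close> is a
  compact odometer and \<open>H\<close> is finitely generated, there is one level \<open>N\<close> such that every
  \<open>c(h, -)\<close> only depends on the \<open>N\<close>-th coordinate. Evaluating at the base point \<open>y\<^sub>0\<close>
  (the point all of whose coordinates are the subgroups \<open>H\<^sub>n\<close>) gives a map \<open>\<theta> = c(-, y\<^sub>0)\<close>,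
  injective by freeness of \<open>H\<close>, which the cocycle identity turns into a homomorphism on
  \<open>H\<^sub>N\<close> that maps cosets of \<open>H\<^sub>m\<close> (\<open>m \<ge> N\<close>) onto cosets of \<open>\<theta> H\<^sub>m\<close> equivariantly. Hence,
  identifying \<open>Y\<close> with the odometer of \<open>(H\<^sub>n)\<close>, \<open>x \<mapsto> (\<theta> (\<psi>\<^sup>-\<^sup>1 x)\<^sub>n\<^sub>+\<^sub>N)\<^sub>n\<close> conjugates \<open>(X, G)\<close> to the odometer of \<open>G\<^sub>n = \<theta> H\<^sub>n\<^sub>+\<^sub>N\<close>.\<close>

lemma group_action_top_group: "group_action_top G T a \<Longrightarrow> group G"
  unfolding group_action_top_def by blast

lemma group_action_top_closed:
  "group_action_top G T a \<Longrightarrow> g \<in> carrier G \<Longrightarrow> x \<in> topspace T \<Longrightarrow> a g x \<in> topspace T"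
  unfolding group_action_top_def continuous_map_def by blast

lemma group_action_top_one:
  "group_action_top G T a \<Longrightarrow> x \<in> topspace T \<Longrightarrow> a \<one>\<^bsub>G\<^esub> x = x"
  unfolding group_action_top_def by blast

lemma group_action_top_mult:
  "group_action_top G T a \<Longrightarrow> g \<in> carrier G \<Longrightarrow> h \<in> carrier G \<Longrightarrow> x \<in> topspace T
    \<Longrightarrow> a (g \<otimes>\<^bsub>G\<^esub> h) x = a g (a h x)"
  unfolding group_action_top_def by blast

lemma group_action_top_inv_cancel:
  assumes act: "group_action_top G T a" and g: "g \<in> carrier G" and x: "x \<in> topspace T"
  shows "a g (a (inv\<^bsub>G\<^esub> g) x) = x"
proof -
  interpret group G by (rule group_action_top_group[OF act])
  have "a g (a (inv\<^bsub>G\<^esub> g) x) = a (g \<otimes>\<^bsub>G\<^esub> inv\<^bsub>G\<^esub> g) x"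
    using group_action_top_mult[OF act g inv_closed[OF g] x] by simp
  then show ?thesis using group_action_top_one[OF act x] g by simp
qed

lemma free_action_unique:
  assumes act: "group_action_top G T a" and free: "free_action G T a"
    and g: "g \<in> carrier G" and g': "g' \<in> carrier G" and x: "x \<in> topspace T" and eq: "a g x = a g' x"
  shows "g = g'"
proof -
  interpret group G by (rule group_action_top_group[OF act])
  have "a (inv\<^bsub>G\<^esub> g' \<otimes>\<^bsub>G\<^esub> g) x = a (inv\<^bsub>G\<^esub> g') (a g' x)"
    using group_action_top_mult[OF act inv_closed[OF g'] g x] eq by simp
  also have "\<dots> = x"
    using group_action_top_inv_cancel[OF act inv_closed[OF g'] x] g' by simp
  finally have "inv\<^bsub>G\<^esub> g' \<otimes>\<^bsub>G\<^esub> g = \<one>\<^bsub>G\<^esub>"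
    using free g g' x unfolding free_action_def by blast
  then show ?thesis using g g' by (metis inv_equality inv_inv inv_closed)
qed

lemma free_action_top_conjugate:
  assumes act: "group_action_top G T a" and free: "free_action G T a"
    and conj: "top_conjugate G T a T' a'"
  shows "free_action G T' a'"
  unfolding free_action_def
proof (intro ballI impI)
  fix g z assume g: "g \<in> carrier G" and z: "z \<in> topspace T'" and fix_z: "a' g z = z"
  obtain \<phi> where \<phi>: "homeomorphic_map T T' \<phi>" "\<forall>g\<in>carrier G. \<forall>x\<in>topspace T. \<phi> (a g x) = a' g (\<phi> x)"
    using conj unfolding top_conjugate_def by blast
  obtain x where x: "x \<in> topspace T" "z = \<phi> x"
    using z homeomorphic_imp_surjective_map[OF \<phi>(1)] by blast
  have "\<phi> (a g x) = \<phi> x" using \<phi>(2) g x fix_z by simp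
  then have "a g x = x"
    using homeomorphic_imp_injective_map[OF \<phi>(1)] group_action_top_closed[OF act g x(1)] x(1)
    unfolding inj_on_def by blast
  then show "g = \<one>\<^bsub>G\<^esub>" using free g x(1) unfolding free_action_def by blast
qed

lemma cantor_space_compact: "cantor_space T \<Longrightarrow> compact_space T"
  unfolding cantor_space_def
  using homeomorphic_compact_space compact_space_product_topology compact_space_discrete_topology
  by (metis finite.emptyI finite_insert)

lemma finite_uniform_bound:
  fixes P :: "'a \<Rightarrow> nat \<Rightarrow> bool"
  assumes "finite A" and "\<forall>s\<in>A. \<exists>n. P s n" and mono: "\<And>s n m. P s n \<Longrightarrow> n \<le> m \<Longrightarrow> P s m"
  shows "\<exists>n. \<forall>s\<in>A. P s n"
  using assms(1,2)
proof (induction A rule: finite_induct)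
  case empty
  then show ?case by simp
next
  case (insert s A)
  obtain n where n: "\<forall>t\<in>A. P t n" using insert by blast
  obtain m where m: "P s m" using insert.prems by blast
  have "\<forall>t\<in>insert s A. P t (max n m)" using n m mono[of _ _ "max n m"] by auto
  then show ?case by blast
qed

section \<open>Odometers\<close>

lemma odo_topspace:
  "topspace (odo_space G Gs) = {x. (\<forall>n. x n \<in> lcosets\<^bsub>G\<^esub> (Gs n)) \<and> (\<forall>n. x (Suc n) \<subseteq> x n)}"
  unfolding odo_space_def by (auto simp: PiE_UNIV_domain)

lemma fi_chain_subgroup: "fi_chain G Gs \<Longrightarrow> subgroup (Gs n) G"
  unfolding fi_chain_def by blast

lemma fi_chain_antimono: "fi_chain G Gs \<Longrightarrow> n \<le> m \<Longrightarrow> Gs m \<subseteq> Gs n"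
  unfolding fi_chain_def by (rule lift_Suc_antimono_le) auto

lemma fi_chain_shift: "fi_chain G Gs \<Longrightarrow> fi_chain G (\<lambda>n. Gs (n + N))"
  unfolding fi_chain_def by simp

lemma odo_level_in_lcosets: "x \<in> topspace (odo_space G Gs) \<Longrightarrow> x n \<in> lcosets\<^bsub>G\<^esub> (Gs n)"
  unfolding odo_topspace by blast

lemma odo_level_antimono: "x \<in> topspace (odo_space G Gs) \<Longrightarrow> n \<le> m \<Longrightarrow> x m \<subseteq> x n"
  unfolding odo_topspace by (rule lift_Suc_antimono_le) auto

lemma lcosets_eq_of_mem:
  assumes "group G" "subgroup K G" "C \<in> lcosets\<^bsub>G\<^esub> K" "k \<in> C"
  shows "C = k <#\<^bsub>G\<^esub> K"
  using assms unfolding LCOSETS_def by (metis UN_E group.l_repr_independence singletonD)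

lemma odo_base_point:
  assumes "group G" "fi_chain G Gs"
  shows "Gs \<in> topspace (odo_space G Gs)"
proof -
  have "Gs n \<in> lcosets\<^bsub>G\<^esub> (Gs n)" for n
    using group.lcos_mult_one[OF assms(1) subgroup.subset[OF fi_chain_subgroup[OF assms(2)]]]
      monoid.one_closed[OF group.is_monoid[OF assms(1)]]
    unfolding LCOSETS_def by (metis UN_iff singletonI)
  then show ?thesis using assms(2) unfolding odo_topspace fi_chain_def by blast
qed

lemma odo_eq_below:
  assumes G: "group G" and ch: "fi_chain G Gs"
    and x: "x \<in> topspace (odo_space G Gs)" and x': "x' \<in> topspace (odo_space G Gs)"
    and eq: "x m = x' m" and nm: "n \<le> m"
  shows "x n = x' n"
proof -
  have sg: "subgroup (Gs k) G" for k by (rule fi_chain_subgroup[OF ch])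
  obtain k where "k \<in> x m"
    using odo_level_in_lcosets[OF x] group.lcos_self[OF G _ sg]
    unfolding LCOSETS_def by blast
  then have "k \<in> x n" "k \<in> x' n" using odo_level_antimono[OF x nm] odo_level_antimono[OF x' nm] eq by blast+
  then show ?thesis
    using lcosets_eq_of_mem[OF G sg] odo_level_in_lcosets[OF x] odo_level_in_lcosets[OF x'] by metis
qed

lemma odo_extend:
  assumes G: "group G" and ch: "fi_chain G Gs"
    and w': "w' \<in> topspace (odo_space G (\<lambda>n. Gs (n + N)))"
  shows "\<exists>w \<in> topspace (odo_space G Gs). \<forall>n. w (n + N) = w' n"
proof -
  have sg: "subgroup (Gs k) G" for k by (rule fi_chain_subgroup[OF ch])
  have w0: "w' 0 \<in> lcosets\<^bsub>G\<^esub> (Gs N)" using odo_level_in_lcosets[OF w', of 0] by simp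
  then obtain k where k: "k \<in> carrier G" "w' 0 = k <#\<^bsub>G\<^esub> Gs N" unfolding LCOSETS_def by blast
  define w where "w m = (if N \<le> m then w' (m - N) else k <#\<^bsub>G\<^esub> Gs m)" for m
  have "w n \<in> lcosets\<^bsub>G\<^esub> (Gs n)" for n
  proof (cases "N \<le> n")
    case True
    then show ?thesis using odo_level_in_lcosets[OF w', of "n - N"] by (simp add: w_def)
  next
    case False
    then show ?thesis using k(1) unfolding w_def LCOSETS_def by auto
  qed
  moreover have "w (Suc n) \<subseteq> w n" for n
  proof (cases "N \<le> n")
    case True
    then show ?thesis using w' unfolding odo_topspace w_def by (simp add: Suc_diff_le)
  next
    case False
    have "w (Suc n) = k <#\<^bsub>G\<^esub> Gs (Suc n)"
      using False k(2) by (cases "Suc n = N") (simp_all add: w_def)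
    moreover have "w n = k <#\<^bsub>G\<^esub> Gs n" using False by (simp add: w_def)
    moreover have "Gs (Suc n) \<subseteq> Gs n" using ch unfolding fi_chain_def by blast
    ultimately show ?thesis unfolding l_coset_def by blast
  qed
  ultimately have "w \<in> topspace (odo_space G Gs)" unfolding odo_topspace by blast
  moreover have "\<forall>n. w (n + N) = w' n" unfolding w_def by simp
  ultimately show ?thesis by blast
qed

lemma Hausdorff_odo: "Hausdorff_space (odo_space G Gs)"
  unfolding odo_space_def
  by (intro Hausdorff_space_subtopology) (simp add: Hausdorff_space_product_topology)

lemma continuous_map_odo_level:
  "continuous_map (odo_space G Gs) (discrete_topology (lcosets\<^bsub>G\<^esub> (Gs n))) (\<lambda>x. x n)"
  unfolding odo_space_def
  by (rule continuous_map_from_subtopology) (rule continuous_map_product_projection, simp)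

lemma continuous_map_into_odo:
  assumes "f \<in> topspace T \<rightarrow> topspace (odo_space G Gs)"
    and "\<And>n. continuous_map T (discrete_topology (lcosets\<^bsub>G\<^esub> (Gs n))) (\<lambda>x. f x n)"
  shows "continuous_map T (odo_space G Gs) f"
  using assms unfolding odo_space_def continuous_map_in_subtopology continuous_map_componentwise_UNIV
  by (auto simp: PiE_UNIV_domain)

lemma odo_cylinder_nhd:
  assumes G: "group G" and ch: "fi_chain G Gs"
    and W: "openin (odo_space G Gs) W" and x: "x \<in> W"
  shows "\<exists>n. \<forall>x'\<in>topspace (odo_space G Gs). x' n = x n \<longrightarrow> x' \<in> W"
proof -
  let ?P = "product_topology (\<lambda>n. discrete_topology (lcosets\<^bsub>G\<^esub> (Gs n))) UNIV"
  obtain T where T: "openin ?P T" "W = T \<inter> {x. \<forall>n. x (Suc n) \<subseteq> x n}"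
    using W unfolding odo_space_def openin_subtopology by blast
  obtain U where U: "finite {i. U i \<noteq> lcosets\<^bsub>G\<^esub> (Gs i)}" "x \<in> Pi\<^sub>E UNIV U" "Pi\<^sub>E UNIV U \<subseteq> T"
    using T x unfolding openin_product_topology_alt by auto
  obtain n where n: "\<forall>i\<in>{i. U i \<noteq> lcosets\<^bsub>G\<^esub> (Gs i)}. i \<le> n"
    using U(1) finite_nat_set_iff_bounded_le by blast
  have xs: "x \<in> topspace (odo_space G Gs)" using x W openin_subset by blast
  show ?thesis
  proof (intro exI ballI impI)
    fix x' assume x': "x' \<in> topspace (odo_space G Gs)" and eq: "x' n = x n"
    have "x' i \<in> U i" for i
    proof (cases "U i = lcosets\<^bsub>G\<^esub> (Gs i)")
      case True
      then show ?thesis using odo_level_in_lcosets[OF x'] by simp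
    next
      case False
      then have "x' i = x i" using odo_eq_below[OF G ch x' xs eq] n by blast
      then show ?thesis using U(2) by (simp add: PiE_UNIV_domain Pi_iff)
    qed
    then have "x' \<in> T" using U(3) by (auto simp: PiE_UNIV_domain Pi_iff)
    then show "x' \<in> W" using T(2) x' unfolding odo_topspace by blast
  qed
qed

lemma odo_shift_homeomorphic_map:
  assumes G: "group G" and ch: "fi_chain G Gs" and compact: "compact_space (odo_space G Gs)"
  shows "homeomorphic_map (odo_space G Gs) (odo_space G (\<lambda>n. Gs (n + N))) (\<lambda>x n. x (n + N))"
proof (rule continuous_imp_homeomorphic_map[OF _ compact Hausdorff_odo])
  have into: "(\<lambda>n. x (n + N)) \<in> topspace (odo_space G (\<lambda>n. Gs (n + N)))"
    if "x \<in> topspace (odo_space G Gs)" for x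
    using that unfolding odo_topspace by simp
  show "continuous_map (odo_space G Gs) (odo_space G (\<lambda>n. Gs (n + N))) (\<lambda>x n. x (n + N))"
  proof (rule continuous_map_into_odo)
    show "(\<lambda>x n. x (n + N)) \<in> topspace (odo_space G Gs) \<rightarrow> topspace (odo_space G (\<lambda>n. Gs (n + N)))"
      using into by blast
    show "continuous_map (odo_space G Gs) (discrete_topology (lcosets\<^bsub>G\<^esub> (Gs (n + N)))) (\<lambda>x. x (n + N))"
      for n by (rule continuous_map_odo_level)
  qed
  show "(\<lambda>x n. x (n + N)) ` topspace (odo_space G Gs) = topspace (odo_space G (\<lambda>n. Gs (n + N)))"
  proof
    show "(\<lambda>x n. x (n + N)) ` topspace (odo_space G Gs) \<subseteq> topspace (odo_space G (\<lambda>n. Gs (n + N)))"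
      using into by blast
    show "topspace (odo_space G (\<lambda>n. Gs (n + N))) \<subseteq> (\<lambda>x n. x (n + N)) ` topspace (odo_space G Gs)"
    proof
      fix w' assume "w' \<in> topspace (odo_space G (\<lambda>n. Gs (n + N)))"
      then obtain w where "w \<in> topspace (odo_space G Gs)" "\<forall>n. w (n + N) = w' n"
        using odo_extend[OF G ch] by blast
      then show "w' \<in> (\<lambda>x n. x (n + N)) ` topspace (odo_space G Gs)"
        by (intro image_eqI[of _ _ w]) auto
    qed
  qed
  show "inj_on (\<lambda>x n. x (n + N)) (topspace (odo_space G Gs))"
  proof (rule inj_onI)
    fix x x' assume x: "x \<in> topspace (odo_space G Gs)" and x': "x' \<in> topspace (odo_space G Gs)"
      and eq: "(\<lambda>n. x (n + N)) = (\<lambda>n. x' (n + N))"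
    show "x = x'"
    proof
      fix n show "x n = x' n" using odo_eq_below[OF G ch x x' fun_cong[OF eq, of n]] by simp
    qed
  qed
qed

lemma odo_image_in_topspace:
  assumes lcosets_eq: "\<And>n. lcosets\<^bsub>G\<^esub> (Gs n) = (\<lambda>C. \<theta> ` C) ` (lcosets\<^bsub>H\<^esub> (Hs n))"
    and x: "x \<in> topspace (odo_space H Hs)"
  shows "(\<lambda>n. \<theta> ` x n) \<in> topspace (odo_space G Gs)"
proof -
  have "\<theta> ` x n \<in> lcosets\<^bsub>G\<^esub> (Gs n)" for n
    unfolding lcosets_eq using odo_level_in_lcosets[OF x] by (rule imageI)
  moreover have "\<theta> ` x (Suc n) \<subseteq> \<theta> ` x n" for n
    using odo_level_antimono[OF x, of n "Suc n"] by (simp add: image_mono)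
  ultimately show ?thesis unfolding odo_topspace by blast
qed

lemma odo_image_surj:
  assumes H: "group H" and ch: "fi_chain H Hs" and inj: "inj_on \<theta> (carrier H)"
    and lcosets_eq: "\<And>n. lcosets\<^bsub>G\<^esub> (Gs n) = (\<lambda>C. \<theta> ` C) ` (lcosets\<^bsub>H\<^esub> (Hs n))"
  shows "(\<lambda>x n. \<theta> ` x n) ` topspace (odo_space H Hs) = topspace (odo_space G Gs)"
proof (rule subset_antisym)
  show "(\<lambda>x n. \<theta> ` x n) ` topspace (odo_space H Hs) \<subseteq> topspace (odo_space G Gs)"
    using odo_image_in_topspace[where Gs=Gs and Hs=Hs and \<theta>=\<theta>, OF lcosets_eq] by blast
  show "topspace (odo_space G Gs) \<subseteq> (\<lambda>x n. \<theta> ` x n) ` topspace (odo_space H Hs)"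
  proof
    fix z assume z: "z \<in> topspace (odo_space G Gs)"
    have "\<forall>n. \<exists>C. C \<in> lcosets\<^bsub>H\<^esub> (Hs n) \<and> \<theta> ` C = z n"
      using odo_level_in_lcosets[OF z] unfolding lcosets_eq by blast
    then obtain C where "\<forall>n. C n \<in> lcosets\<^bsub>H\<^esub> (Hs n) \<and> \<theta> ` C n = z n" by (rule choice[THEN exE])
    then have C: "\<And>n. C n \<in> lcosets\<^bsub>H\<^esub> (Hs n)" "\<And>n. \<theta> ` C n = z n" by blast+
    have "C (Suc n) \<subseteq> C n" for n
    proof -
      have "\<theta> ` C (Suc n) \<subseteq> \<theta> ` C n" using C(2) odo_level_antimono[OF z, of n "Suc n"] by simp
      then show ?thesis
        using inj_on_image_subset_iff[OF inj] subgroup.lcosets_carrier[OF fi_chain_subgroup[OF ch] H C(1)]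
        by blast
    qed
    then have "C \<in> topspace (odo_space H Hs)" using C(1) unfolding odo_topspace by blast
    moreover have "z = (\<lambda>n. \<theta> ` C n)" using C(2) by (simp add: fun_eq_iff)
    ultimately show "z \<in> (\<lambda>x n. \<theta> ` x n) ` topspace (odo_space H Hs)"
      using image_eqI[of z "\<lambda>x n. \<theta> ` x n" C] by simp
  qed
qed

lemma odo_image_homeomorphic_map:
  assumes H: "group H" and ch: "fi_chain H Hs" and compact: "compact_space (odo_space H Hs)"
    and inj: "inj_on \<theta> (carrier H)"
    and lcosets_eq: "\<And>n. lcosets\<^bsub>G\<^esub> (Gs n) = (\<lambda>C. \<theta> ` C) ` (lcosets\<^bsub>H\<^esub> (Hs n))"
  shows "homeomorphic_map (odo_space H Hs) (odo_space G Gs) (\<lambda>x n. \<theta> ` x n)"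
proof (rule continuous_imp_homeomorphic_map[OF _ compact Hausdorff_odo odo_image_surj[where Gs=Gs, OF H ch inj lcosets_eq]])
  show "continuous_map (odo_space H Hs) (odo_space G Gs) (\<lambda>x n. \<theta> ` x n)"
  proof (rule continuous_map_into_odo)
    show "(\<lambda>x n. \<theta> ` x n) \<in> topspace (odo_space H Hs) \<rightarrow> topspace (odo_space G Gs)"
      using odo_image_in_topspace[where Gs=Gs and Hs=Hs and \<theta>=\<theta>, OF lcosets_eq] by blast
    fix n
    have discrete: "continuous_map (discrete_topology (lcosets\<^bsub>H\<^esub> (Hs n))) (discrete_topology (lcosets\<^bsub>G\<^esub> (Gs n)))
            (\<lambda>C. \<theta> ` C)"
      unfolding continuous_map_from_discrete_topology topspace_discrete_topology lcosets_eq
      by (intro funcsetI imageI)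
    show "continuous_map (odo_space H Hs) (discrete_topology (lcosets\<^bsub>G\<^esub> (Gs n))) (\<lambda>x. \<theta> ` x n)"
      using continuous_map_compose[OF continuous_map_odo_level[of H Hs n] discrete] by (simp add: o_def)
  qed
  show "inj_on (\<lambda>x n. \<theta> ` x n) (topspace (odo_space H Hs))"
  proof (rule inj_onI)
    fix x x' assume x: "x \<in> topspace (odo_space H Hs)" and x': "x' \<in> topspace (odo_space H Hs)"
      and eq: "(\<lambda>n. \<theta> ` x n) = (\<lambda>n. \<theta> ` x' n)"
    have carrier: "z n \<subseteq> carrier H" if "z \<in> topspace (odo_space H Hs)" for z n
      by (rule subgroup.lcosets_carrier[OF fi_chain_subgroup[OF ch] H odo_level_in_lcosets[OF that]])
    show "x = x'"
    proof
      fix n show "x n = x' n"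
        using inj_on_image_eq_iff[OF inj carrier[OF x] carrier[OF x']] fun_cong[OF eq, of n] by simp
    qed
  qed
qed

lemma odo_cylinder_openin:
  assumes \<phi>: "continuous_map T (odo_space G Gs) \<phi>" and y: "y \<in> topspace T"
  shows "openin T {y' \<in> topspace T. \<phi> y' n = \<phi> y n}"
proof -
  have "\<phi> y \<in> topspace (odo_space G Gs)" using \<phi> y unfolding continuous_map_def by blast
  then have "\<phi> y n \<in> lcosets\<^bsub>G\<^esub> (Gs n)" by (rule odo_level_in_lcosets)
  then show ?thesis
    using openin_continuous_map_preimage[OF continuous_map_compose[OF \<phi> continuous_map_odo_level],
        where U="{\<phi> y n}"]
    by (simp add: o_def)
qed

lemma odo_cylinder_subset_openin:
  assumes G: "group G" and ch: "fi_chain G Gs" and \<phi>: "homeomorphic_map T (odo_space G Gs) \<phi>"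
    and V: "openin T V" and y: "y \<in> V"
  shows "\<exists>n. {y' \<in> topspace T. \<phi> y' n = \<phi> y n} \<subseteq> V"
proof -
  have "openin (odo_space G Gs) (\<phi> ` V)"
    using homeomorphic_map_openness[OF \<phi> openin_subset[OF V]] V by simp
  then obtain n where n: "\<forall>x'\<in>topspace (odo_space G Gs). x' n = \<phi> y n \<longrightarrow> x' \<in> \<phi> ` V"
    using odo_cylinder_nhd[OF G ch] y by blast
  have "y' \<in> V" if "y' \<in> topspace T" "\<phi> y' n = \<phi> y n" for y'
    using n homeomorphic_imp_surjective_map[OF \<phi>] homeomorphic_imp_injective_map[OF \<phi>]
      openin_subset[OF V] that
    unfolding inj_on_def by blast
  then show ?thesis by blast
qed

lemma locally_constant_factors_through_level:
  assumes G: "group G" and ch: "fi_chain G Gs" and \<phi>: "homeomorphic_map T (odo_space G Gs) \<phi>"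
    and compact: "compact_space T"
    and loc: "\<forall>y\<in>topspace T. \<exists>V. openin T V \<and> y \<in> V \<and> (\<forall>y'\<in>V. f y' = f y)"
  shows "\<exists>N. \<forall>y\<in>topspace T. \<forall>y'\<in>topspace T. \<phi> y N = \<phi> y' N \<longrightarrow> f y = f y'"
proof -
  define cyl where "cyl y n = {y' \<in> topspace T. \<phi> y' n = \<phi> y n}" for y n
  have "\<exists>n. \<forall>y'\<in>cyl y n. f y' = f y" if y: "y \<in> topspace T" for y
  proof -
    obtain V where V: "openin T V" "y \<in> V" "\<forall>y'\<in>V. f y' = f y" using loc y by blast
    then show ?thesis using odo_cylinder_subset_openin[OF G ch \<phi> V(1,2)] unfolding cyl_def by blast
  qed
  then obtain n where n: "\<And>y. y \<in> topspace T \<Longrightarrow> \<forall>y'\<in>cyl y (n y). f y' = f y" by metis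
  have "compactin T (topspace T)" using compact unfolding compact_space_def .
  moreover have "\<forall>U\<in>(\<lambda>y. cyl y (n y)) ` topspace T. openin T U"
    using odo_cylinder_openin[OF homeomorphic_imp_continuous_map[OF \<phi>]] unfolding cyl_def by blast
  moreover have "topspace T \<subseteq> \<Union> ((\<lambda>y. cyl y (n y)) ` topspace T)" unfolding cyl_def by blast
  ultimately obtain \<F> where \<F>: "finite \<F>" "\<F> \<subseteq> (\<lambda>y. cyl y (n y)) ` topspace T" "topspace T \<subseteq> \<Union>\<F>"
    unfolding compactin_def by meson
  obtain Y0 where Y0: "Y0 \<subseteq> topspace T" "finite Y0" "\<F> = (\<lambda>y. cyl y (n y)) ` Y0"
    using finite_subset_image[OF \<F>(1,2)] by blast
  obtain N where N: "\<forall>y\<in>Y0. n y \<le> N"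
    using Y0(2) finite_nat_set_iff_bounded_le[of "n ` Y0"] by blast
  show ?thesis
  proof (intro exI ballI impI)
    fix y y' assume y: "y \<in> topspace T" and y': "y' \<in> topspace T" and eq: "\<phi> y N = \<phi> y' N"
    obtain y1 where y1: "y1 \<in> Y0" "y \<in> cyl y1 (n y1)" using \<F>(3) Y0(3) y by blast
    have \<phi>_top: "\<phi> z \<in> topspace (odo_space G Gs)" if "z \<in> topspace T" for z
      using homeomorphic_imp_surjective_map[OF \<phi>] that by blast
    have "\<phi> y' (n y1) = \<phi> y (n y1)"
      using odo_eq_below[OF G ch \<phi>_top[OF y'] \<phi>_top[OF y] eq[symmetric]] N y1(1) by blast
    then have y'_cyl: "y' \<in> cyl y1 (n y1)" using y1(2) y' unfolding cyl_def by simp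
    have "\<forall>z\<in>cyl y1 (n y1). f z = f y1" using n y1(1) Y0(1) by blast
    then show "f y = f y'" using y1(2) y'_cyl by simp
  qed
qed

lemma determines_odo: "fi_chain G Gs \<Longrightarrow> determines G Gs (odo_space G Gs) (odo_act G)"
  unfolding determines_def top_conjugate_def by (intro conjI exI[of _ id]) simp_all

section \<open>The orbit cocycle\<close>

lemma orbit_equiv_cocycle_exists:
  assumes psi: "homeomorphic_maps TX TY \<psi> \<psi>'" and act: "group_action_top G TX a"
    and orbit: "\<forall>x\<in>topspace TX. \<psi> ` orbit_of G a x = orbit_of H b (\<psi> x)"
    and y: "y \<in> topspace TY"
  shows "h \<in> carrier H \<Longrightarrow> \<exists>g\<in>carrier G. \<psi>' (b h y) = a g (\<psi>' y)"
    and "g \<in> carrier G \<Longrightarrow> \<exists>h\<in>carrier H. a g (\<psi>' y) = \<psi>' (b h y)"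
proof -
  have x: "\<psi>' y \<in> topspace TX" "\<psi> (\<psi>' y) = y"
    using psi y unfolding homeomorphic_maps_def continuous_map_def by auto
  have inverse: "\<psi>' (\<psi> x) = x" if "x \<in> topspace TX" for x
    using psi that unfolding homeomorphic_maps_def by blast
  show "\<exists>g\<in>carrier G. \<psi>' (b h y) = a g (\<psi>' y)" if h: "h \<in> carrier H"
  proof -
    have "b h y \<in> \<psi> ` orbit_of G a (\<psi>' y)" using orbit x h unfolding orbit_of_def by auto
    then obtain g where "g \<in> carrier G" "b h y = \<psi> (a g (\<psi>' y))" unfolding orbit_of_def by blast
    then show ?thesis using inverse group_action_top_closed[OF act _ x(1)] by metis
  qed
  show "\<exists>h\<in>carrier H. a g (\<psi>' y) = \<psi>' (b h y)" if g: "g \<in> carrier G"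
  proof -
    have "\<psi> (a g (\<psi>' y)) \<in> orbit_of H b y" using orbit x g unfolding orbit_of_def by (metis imageI)
    then obtain h where "h \<in> carrier H" "\<psi> (a g (\<psi>' y)) = b h y" unfolding orbit_of_def by blast
    then show ?thesis using inverse group_action_top_closed[OF act g x(1)] by metis
  qed
qed

locale orbit_cocycle =
  fixes G :: "('g, 'b) monoid_scheme" and TX :: "'x topology" and a :: "'g \<Rightarrow> 'x \<Rightarrow> 'x"
    and H :: "('h, 'c) monoid_scheme" and TY :: "'y topology" and b :: "'h \<Rightarrow> 'y \<Rightarrow> 'y"
    and \<psi> :: "'y \<Rightarrow> 'x"
  assumes action_G: "group_action_top G TX a" and free_G: "free_action G TX a"
    and action_H: "group_action_top H TY b"
    and psi_into: "\<psi> \<in> topspace TY \<rightarrow> topspace TX"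
    and orbit_into: "\<And>y h. y \<in> topspace TY \<Longrightarrow> h \<in> carrier H \<Longrightarrow> \<exists>g\<in>carrier G. \<psi> (b h y) = a g (\<psi> y)"
begin

definition cocycle :: "'h \<Rightarrow> 'y \<Rightarrow> 'g" where
  "cocycle h y = (THE g. g \<in> carrier G \<and> \<psi> (b h y) = a g (\<psi> y))"

lemma cocycle_unique:
  assumes "h \<in> carrier H" "y \<in> topspace TY" "g \<in> carrier G" "\<psi> (b h y) = a g (\<psi> y)"
  shows "cocycle h y = g"
  unfolding cocycle_def
proof (rule the_equality)
  show "g \<in> carrier G \<and> \<psi> (b h y) = a g (\<psi> y)" using assms by blast
  show "g' = g" if "g' \<in> carrier G \<and> \<psi> (b h y) = a g' (\<psi> y)" for g'
    using free_action_unique[OF action_G free_G] that assms psi_into by (metis PiE)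
qed

lemma cocycle_closed: "h \<in> carrier H \<Longrightarrow> y \<in> topspace TY \<Longrightarrow> cocycle h y \<in> carrier G"
  and cocycle_action: "h \<in> carrier H \<Longrightarrow> y \<in> topspace TY \<Longrightarrow> \<psi> (b h y) = a (cocycle h y) (\<psi> y)"
  using orbit_into cocycle_unique by metis+

lemma cocycle_mult:
  assumes h: "h \<in> carrier H" and k: "k \<in> carrier H" and y: "y \<in> topspace TY"
  shows "cocycle (h \<otimes>\<^bsub>H\<^esub> k) y = cocycle h (b k y) \<otimes>\<^bsub>G\<^esub> cocycle k y"
proof (rule cocycle_unique)
  have ky: "b k y \<in> topspace TY" by (rule group_action_top_closed[OF action_H k y])
  show "h \<otimes>\<^bsub>H\<^esub> k \<in> carrier H"
    using h k group.is_monoid[OF group_action_top_group[OF action_H]] by (simp add: monoid.m_closed)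
  show "cocycle h (b k y) \<otimes>\<^bsub>G\<^esub> cocycle k y \<in> carrier G"
    using cocycle_closed[OF h ky] cocycle_closed[OF k y] group.is_monoid[OF group_action_top_group[OF action_G]]
    by (simp add: monoid.m_closed)
  have "\<psi> (b (h \<otimes>\<^bsub>H\<^esub> k) y) = \<psi> (b h (b k y))" using group_action_top_mult[OF action_H h k y] by simp
  also have "\<dots> = a (cocycle h (b k y)) (a (cocycle k y) (\<psi> y))"
    using cocycle_action[OF h ky] cocycle_action[OF k y] by simp
  also have "\<dots> = a (cocycle h (b k y) \<otimes>\<^bsub>G\<^esub> cocycle k y) (\<psi> y)"
    using group_action_top_mult[OF action_G cocycle_closed[OF h ky] cocycle_closed[OF k y]] psi_into y
    by (simp add: Pi_iff)
  finally show "\<psi> (b (h \<otimes>\<^bsub>H\<^esub> k) y) = a (cocycle h (b k y) \<otimes>\<^bsub>G\<^esub> cocycle k y) (\<psi> y)" .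
qed (use y in simp)

lemma cocycle_one: "y \<in> topspace TY \<Longrightarrow> cocycle \<one>\<^bsub>H\<^esub> y = \<one>\<^bsub>G\<^esub>"
  using cocycle_unique group_action_top_one[OF action_H] group_action_top_one[OF action_G] psi_into
    monoid.one_closed[OF group.is_monoid[OF group_action_top_group[OF action_H]]]
    monoid.one_closed[OF group.is_monoid[OF group_action_top_group[OF action_G]]]
  by (metis PiE)

end

section \<open>Orbit equivalence with an odometer\<close>

locale cont_orbit_equiv_odometer = orbit_cocycle G TX a H TY b \<psi>
  for G :: "('g, 'b) monoid_scheme" and TX :: "'x topology" and a :: "'g \<Rightarrow> 'x \<Rightarrow> 'x"
    and H :: "('h, 'c) monoid_scheme" and TY :: "'y topology" and b :: "'h \<Rightarrow> 'y \<Rightarrow> 'y"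
    and \<psi> :: "'y \<Rightarrow> 'x" +
  fixes \<psi>' :: "'x \<Rightarrow> 'y" and Hs :: "nat \<Rightarrow> 'h set" and \<phi> :: "'y \<Rightarrow> nat \<Rightarrow> 'h set"
  assumes free_H: "free_action H TY b"
    and psi: "homeomorphic_maps TY TX \<psi> \<psi>'"
    and orbit_onto: "\<And>y g. y \<in> topspace TY \<Longrightarrow> g \<in> carrier G \<Longrightarrow> \<exists>h\<in>carrier H. a g (\<psi> y) = \<psi> (b h y)"
    and locally_constant: "\<And>y h. y \<in> topspace TY \<Longrightarrow> h \<in> carrier H \<Longrightarrow>
          \<exists>g\<in>carrier G. \<exists>V. openin TY V \<and> y \<in> V \<and> (\<forall>w\<in>V. \<psi> (b h w) = a g (\<psi> w))"
    and fin_gen: "finitely_generated H"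
    and compact: "compact_space TY"
    and chain: "fi_chain H Hs"
    and phi: "homeomorphic_map TY (odo_space H Hs) \<phi>"
    and phi_act: "\<And>h y. h \<in> carrier H \<Longrightarrow> y \<in> topspace TY \<Longrightarrow> \<phi> (b h y) = odo_act H h (\<phi> y)"
begin

lemma group_G: "group G" and group_H: "group H"
  using group_action_top_group action_G action_H by blast+

lemma Hs_subgroup: "subgroup (Hs n) H"
  by (rule fi_chain_subgroup[OF chain])

lemma phi_top: "y \<in> topspace TY \<Longrightarrow> \<phi> y \<in> topspace (odo_space H Hs)"
  using homeomorphic_imp_surjective_map[OF phi] by blast

lemma phi_level_act: "h \<in> carrier H \<Longrightarrow> y \<in> topspace TY \<Longrightarrow> \<phi> (b h y) n = h <#\<^bsub>H\<^esub> \<phi> y n"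
  using phi_act unfolding odo_act_def by simp

lemma phi_eq_below:
  "y \<in> topspace TY \<Longrightarrow> y' \<in> topspace TY \<Longrightarrow> \<phi> y m = \<phi> y' m \<Longrightarrow> n \<le> m \<Longrightarrow> \<phi> y n = \<phi> y' n"
  using odo_eq_below[OF group_H chain phi_top phi_top] by blast

definition level_invariant :: "'h \<Rightarrow> nat \<Rightarrow> bool" where
  "level_invariant h n \<longleftrightarrow>
     (\<forall>y\<in>topspace TY. \<forall>y'\<in>topspace TY. \<phi> y n = \<phi> y' n \<longrightarrow> cocycle h y = cocycle h y')"

lemma level_invariant_mono: "level_invariant h n \<Longrightarrow> n \<le> m \<Longrightarrow> level_invariant h m"
  unfolding level_invariant_def using phi_eq_below by blast

text \<open>Continuity of the orbit equivalence is exactly local constancy of the cocycle.\<close>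
lemma level_invariant_exists:
  assumes h: "h \<in> carrier H" shows "\<exists>n. level_invariant h n"
proof -
  have "\<exists>V. openin TY V \<and> y \<in> V \<and> (\<forall>y'\<in>V. cocycle h y' = cocycle h y)" if y: "y \<in> topspace TY" for y
  proof -
    obtain g V where gV: "g \<in> carrier G" "openin TY V" "y \<in> V" "\<forall>w\<in>V. \<psi> (b h w) = a g (\<psi> w)"
      using locally_constant[OF y h] by blast
    have "cocycle h w = g" if "w \<in> V" for w
      using cocycle_unique[OF h _ gV(1)] gV(4) openin_subset[OF gV(2)] that by blast
    then show ?thesis using gV(2,3) by metis
  qed
  then have "\<exists>N. \<forall>y\<in>topspace TY. \<forall>y'\<in>topspace TY. \<phi> y N = \<phi> y' N \<longrightarrow> cocycle h y = cocycle h y'"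
    by (intro locally_constant_factors_through_level[OF group_H chain phi compact]) blast
  then show ?thesis unfolding level_invariant_def .
qed

lemma level_invariant_mult:
  assumes h: "h \<in> carrier H" and k: "k \<in> carrier H"
    and inv_h: "level_invariant h n" and inv_k: "level_invariant k n"
  shows "level_invariant (h \<otimes>\<^bsub>H\<^esub> k) n"
  unfolding level_invariant_def
proof (intro ballI impI)
  fix y y' assume y: "y \<in> topspace TY" and y': "y' \<in> topspace TY" and eq: "\<phi> y n = \<phi> y' n"
  have "\<phi> (b k y) n = \<phi> (b k y') n" using phi_level_act[OF k y] phi_level_act[OF k y'] eq by simp
  then have "cocycle h (b k y) = cocycle h (b k y')"
    using inv_h group_action_top_closed[OF action_H k] y y' unfolding level_invariant_def by blast
  moreover have "cocycle k y = cocycle k y'" using inv_k y y' eq unfolding level_invariant_def by blast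
  ultimately show "cocycle (h \<otimes>\<^bsub>H\<^esub> k) y = cocycle (h \<otimes>\<^bsub>H\<^esub> k) y'"
    using cocycle_mult[OF h k y] cocycle_mult[OF h k y'] by simp
qed

text \<open>Here finite generation of \<open>H\<close> is used: a single level works for a finite
  symmetric generating set, and the cocycle identity propagates it to all of \<open>H\<close>.\<close>
lemma level_invariant_uniform: "\<exists>N. \<forall>h\<in>carrier H. level_invariant h N"
proof -
  obtain S where S: "finite S" "S \<subseteq> carrier H" "generate H S = carrier H"
    using fin_gen unfolding finitely_generated_def by blast
  have "\<forall>s\<in>S \<union> (\<lambda>s. inv\<^bsub>H\<^esub> s) ` S. \<exists>n. level_invariant s n"
    using level_invariant_exists S(2) group.inv_closed[OF group_H] by blast
  then obtain N where N: "\<forall>s\<in>S \<union> (\<lambda>s. inv\<^bsub>H\<^esub> s) ` S. level_invariant s N"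
    using finite_uniform_bound[of "S \<union> (\<lambda>s. inv\<^bsub>H\<^esub> s) ` S" level_invariant] S(1) level_invariant_mono
    by blast
  have "level_invariant h N" if "h \<in> generate H S" for h
    using that
  proof (induction rule: generate.induct)
    case one
    show ?case using cocycle_one unfolding level_invariant_def by simp
  next
    case (incl h)
    then show ?case using N by blast
  next
    case (inv h)
    then show ?case using N by blast
  next
    case (eng h k)
    then show ?case using level_invariant_mult S(3) by blast
  qed
  then show ?thesis using S(3) by blast
qed

definition N :: nat where
  "N = (SOME N. \<forall>h\<in>carrier H. level_invariant h N)"

lemma level_invariant_N: "h \<in> carrier H \<Longrightarrow> level_invariant h N"
  using someI_ex[OF level_invariant_uniform] unfolding N_def by blast

definition y0 :: 'y where
  "y0 = (SOME y. y \<in> topspace TY \<and> \<phi> y = Hs)"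

lemma y0: "y0 \<in> topspace TY" "\<phi> y0 = Hs"
proof -
  have "\<exists>y. y \<in> topspace TY \<and> \<phi> y = Hs"
    using odo_base_point[OF group_H chain] homeomorphic_imp_surjective_map[OF phi] by (metis imageE)
  then have "y0 \<in> topspace TY \<and> \<phi> y0 = Hs" unfolding y0_def by (rule someI_ex)
  then show "y0 \<in> topspace TY" "\<phi> y0 = Hs" by blast+
qed

definition \<theta> :: "'h \<Rightarrow> 'g" where
  "\<theta> h = cocycle h y0"

lemma theta_closed: "h \<in> carrier H \<Longrightarrow> \<theta> h \<in> carrier G"
  unfolding \<theta>_def using cocycle_closed y0(1) by blast

lemma base_level:
  assumes "y \<in> topspace TY" "\<phi> y m = Hs m" "n \<le> m" shows "\<phi> y n = Hs n"
  by (rule odo_eq_below[OF group_H chain phi_top odo_base_point[OF group_H chain]]) (use assms in blast)+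

lemma cocycle_base: "h \<in> carrier H \<Longrightarrow> y \<in> topspace TY \<Longrightarrow> \<phi> y N = Hs N \<Longrightarrow> cocycle h y = \<theta> h"
  using level_invariant_N y0 unfolding level_invariant_def \<theta>_def by metis

lemma theta_cocycle:
  assumes h: "h \<in> carrier H" and k: "k \<in> carrier H" and y: "y \<in> topspace TY" and base: "\<phi> y N = Hs N"
  shows "cocycle h (b k y) \<otimes>\<^bsub>G\<^esub> \<theta> k = \<theta> (h \<otimes>\<^bsub>H\<^esub> k)"
proof -
  have "h \<otimes>\<^bsub>H\<^esub> k \<in> carrier H" using h k group.is_monoid[OF group_H] by (simp add: monoid.m_closed)
  then show ?thesis using cocycle_mult[OF h k y] cocycle_base[OF _ y base] k by simp
qed

lemma theta_mult:
  assumes k: "k \<in> carrier H" and h: "h \<in> Hs N"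
  shows "\<theta> (k \<otimes>\<^bsub>H\<^esub> h) = \<theta> k \<otimes>\<^bsub>G\<^esub> \<theta> h"
proof -
  have hc: "h \<in> carrier H" using h subgroup.mem_carrier[OF Hs_subgroup] by blast
  have "\<phi> (b h y0) N = h <#\<^bsub>H\<^esub> Hs N" using phi_level_act[OF hc y0(1)] y0(2) by simp
  also have "\<dots> = Hs N" using group.coset_join3[OF group_H hc Hs_subgroup h] .
  finally have "cocycle k (b h y0) = \<theta> k"
    using cocycle_base[OF k group_action_top_closed[OF action_H hc y0(1)]] by blast
  then show ?thesis using theta_cocycle[OF k hc y0(1)] y0(2) by simp
qed

lemma theta_inj: "inj_on \<theta> (carrier H)"
proof (rule inj_onI)
  fix k k' assume k: "k \<in> carrier H" and k': "k' \<in> carrier H" and eq: "\<theta> k = \<theta> k'"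
  have "\<psi> (b k y0) = \<psi> (b k' y0)"
    using cocycle_action[OF k y0(1)] cocycle_action[OF k' y0(1)] eq unfolding \<theta>_def by simp
  then have "b k y0 = b k' y0"
    using psi group_action_top_closed[OF action_H _ y0(1)] k k' unfolding homeomorphic_maps_def by metis
  then show "k = k'" using free_action_unique[OF action_H free_H k k' y0(1)] by blast
qed

lemma group_hom_theta: "group_hom (H\<lparr>carrier := Hs N\<rparr>) G \<theta>"
proof (rule group_hom.intro)
  show "group (H\<lparr>carrier := Hs N\<rparr>)" by (rule subgroup.subgroup_is_group[OF Hs_subgroup group_H])
  show "group G" by (rule group_G)
  have "\<theta> \<in> Hs N \<rightarrow> carrier G" using theta_closed subgroup.mem_carrier[OF Hs_subgroup] by blast
  then show "group_hom_axioms (H\<lparr>carrier := Hs N\<rparr>) G \<theta>"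
    unfolding group_hom_axioms_def hom_def
    using theta_mult subgroup.mem_carrier[OF Hs_subgroup] by simp
qed

definition Gs :: "nat \<Rightarrow> 'g set" where
  "Gs n = \<theta> ` Hs (n + N)"

lemma Gs_subgroup: "subgroup (Gs n) G"
proof -
  have "subgroup (Hs (n + N)) (H\<lparr>carrier := Hs N\<rparr>)"
    by (rule group.subgroup_incl[OF group_H Hs_subgroup Hs_subgroup fi_chain_antimono[OF chain]]) simp
  then show ?thesis unfolding Gs_def by (rule group_hom.subgroup_img_is_subgroup[OF group_hom_theta])
qed

lemma theta_lcoset:
  assumes k: "k \<in> carrier H" and m: "N \<le> m"
  shows "\<theta> ` (k <#\<^bsub>H\<^esub> Hs m) = \<theta> k <#\<^bsub>G\<^esub> \<theta> ` Hs m"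
proof -
  have "\<theta> (k \<otimes>\<^bsub>H\<^esub> h) = \<theta> k \<otimes>\<^bsub>G\<^esub> \<theta> h" if "h \<in> Hs m" for h
    using theta_mult[OF k] fi_chain_antimono[OF chain m] that by blast
  then show ?thesis unfolding l_coset_def by (auto simp: image_iff)
qed

text \<open>The key identity: writing \<open>y = k \<cdot> y'\<close> with \<open>y'\<close> in the base cylinder, the
  cocycle identity gives \<open>g \<theta>(k) = \<theta>(h k)\<close> whenever \<open>g \<cdot> \<psi> y = \<psi> (h \<cdot> y)\<close>.\<close>
lemma theta_level_act:
  assumes y: "y \<in> topspace TY" and g: "g \<in> carrier G" and h: "h \<in> carrier H"
    and eq: "a g (\<psi> y) = \<psi> (b h y)" and m: "N \<le> m"
  shows "\<theta> ` \<phi> (b h y) m = g <#\<^bsub>G\<^esub> \<theta> ` \<phi> y m"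
proof -
  interpret H: group H by (rule group_H)
  interpret G: group G by (rule group_G)
  have Hs_sub: "Hs m \<subseteq> carrier H" by (rule subgroup.subset[OF Hs_subgroup])
  obtain k where k: "k \<in> carrier H" "\<phi> y m = k <#\<^bsub>H\<^esub> Hs m"
    using odo_level_in_lcosets[OF phi_top[OF y]] unfolding LCOSETS_def by blast
  define y' where "y' = b (inv\<^bsub>H\<^esub> k) y"
  have y': "y' \<in> topspace TY" unfolding y'_def by (rule group_action_top_closed[OF action_H H.inv_closed[OF k(1)] y])
  have y_eq: "b k y' = y" unfolding y'_def by (rule group_action_top_inv_cancel[OF action_H k(1) y])
  have "\<phi> y' m = (inv\<^bsub>H\<^esub> k \<otimes>\<^bsub>H\<^esub> k) <#\<^bsub>H\<^esub> Hs m"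
    using phi_level_act[OF H.inv_closed[OF k(1)] y] k H.lcos_m_assoc[OF Hs_sub H.inv_closed[OF k(1)] k(1)]
    unfolding y'_def by simp
  then have "\<phi> y' m = Hs m" using H.lcos_mult_one[OF Hs_sub] k(1) by simp
  then have base: "\<phi> y' N = Hs N" using base_level[OF y'] m by blast
  have "g = cocycle h y" using cocycle_unique[OF h y g] eq by simp
  then have g_theta: "g \<otimes>\<^bsub>G\<^esub> \<theta> k = \<theta> (h \<otimes>\<^bsub>H\<^esub> k)"
    using theta_cocycle[OF h k(1) y' base] y_eq by simp
  have theta_sub: "\<theta> ` Hs m \<subseteq> carrier G" using theta_closed Hs_sub by blast
  have "\<theta> ` \<phi> (b h y) m = \<theta> ` ((h \<otimes>\<^bsub>H\<^esub> k) <#\<^bsub>H\<^esub> Hs m)"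
    using phi_level_act[OF h y] k H.lcos_m_assoc[OF Hs_sub h k(1)] by simp
  also have "\<dots> = (g \<otimes>\<^bsub>G\<^esub> \<theta> k) <#\<^bsub>G\<^esub> \<theta> ` Hs m"
    using theta_lcoset[OF H.m_closed[OF h k(1)] m] g_theta by simp
  also have "\<dots> = g <#\<^bsub>G\<^esub> \<theta> ` \<phi> y m"
    using G.lcos_m_assoc[OF theta_sub g theta_closed[OF k(1)]] theta_lcoset[OF k(1) m] k(2) by simp
  finally show ?thesis .
qed

lemma lcosets_Gs: "lcosets\<^bsub>G\<^esub> (Gs n) = (\<lambda>C. \<theta> ` C) ` (lcosets\<^bsub>H\<^esub> (Hs (n + N)))"
proof
  show "lcosets\<^bsub>G\<^esub> (Gs n) \<subseteq> (\<lambda>C. \<theta> ` C) ` (lcosets\<^bsub>H\<^esub> (Hs (n + N)))"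
  proof
    fix D assume "D \<in> lcosets\<^bsub>G\<^esub> (Gs n)"
    then obtain g where g: "g \<in> carrier G" "D = g <#\<^bsub>G\<^esub> Gs n" unfolding LCOSETS_def by blast
    obtain h where h: "h \<in> carrier H" "a g (\<psi> y0) = \<psi> (b h y0)" using orbit_onto[OF y0(1) g(1)] by blast
    have "D = \<theta> ` \<phi> (b h y0) (n + N)"
      using theta_level_act[OF y0(1) g(1) h, of "n + N"] g(2) y0(2) unfolding Gs_def by simp
    moreover have "\<phi> (b h y0) (n + N) \<in> lcosets\<^bsub>H\<^esub> (Hs (n + N))"
      by (rule odo_level_in_lcosets[OF phi_top[OF group_action_top_closed[OF action_H h(1) y0(1)]]])
    ultimately show "D \<in> (\<lambda>C. \<theta> ` C) ` (lcosets\<^bsub>H\<^esub> (Hs (n + N)))" by (rule image_eqI)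
  qed
  show "(\<lambda>C. \<theta> ` C) ` (lcosets\<^bsub>H\<^esub> (Hs (n + N))) \<subseteq> lcosets\<^bsub>G\<^esub> (Gs n)"
  proof
    fix D assume "D \<in> (\<lambda>C. \<theta> ` C) ` (lcosets\<^bsub>H\<^esub> (Hs (n + N)))"
    then obtain k where k: "k \<in> carrier H" "D = \<theta> ` (k <#\<^bsub>H\<^esub> Hs (n + N))" unfolding LCOSETS_def by blast
    then have "D = \<theta> k <#\<^bsub>G\<^esub> Gs n" using theta_lcoset[OF k(1), of "n + N"] unfolding Gs_def by simp
    then show "D \<in> lcosets\<^bsub>G\<^esub> (Gs n)" using theta_closed[OF k(1)] unfolding LCOSETS_def by blast
  qed
qed

lemma fi_chain_Gs: "fi_chain G Gs"
  unfolding fi_chain_def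
proof (intro allI conjI)
  fix n
  show "subgroup (Gs n) G" by (rule Gs_subgroup)
  show "finite (lcosets\<^bsub>G\<^esub> (Gs n))"
    unfolding lcosets_Gs using chain unfolding fi_chain_def by blast
  have "Hs (Suc n + N) \<subseteq> Hs (n + N)" using chain unfolding fi_chain_def by simp
  then show "Gs (Suc n) \<subseteq> Gs n" unfolding Gs_def by (rule image_mono)
qed

lemma shifted_phi_homeomorphic:
  "homeomorphic_map TY (odo_space H (\<lambda>n. Hs (n + N))) (\<lambda>y n. \<phi> y (n + N))"
proof -
  have "compact_space (odo_space H Hs)"
    using compact homeomorphic_compact_space[OF homeomorphic_map_imp_homeomorphic_space[OF phi]] by simp
  from homeomorphic_map_compose[OF phi odo_shift_homeomorphic_map[OF group_H chain this, of N]]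
  show ?thesis by (simp add: o_def)
qed

lemma determines_TY: "determines H (\<lambda>n. Hs (n + N)) TY b"
  unfolding determines_def top_conjugate_def
proof (intro conjI exI[of _ "\<lambda>y n. \<phi> y (n + N)"] ballI)
  show "fi_chain H (\<lambda>n. Hs (n + N))" by (rule fi_chain_shift[OF chain])
  show "homeomorphic_map TY (odo_space H (\<lambda>n. Hs (n + N))) (\<lambda>y n. \<phi> y (n + N))"
    by (rule shifted_phi_homeomorphic)
  show "(\<lambda>n. \<phi> (b h y) (n + N)) = odo_act H h (\<lambda>n. \<phi> y (n + N))" if "h \<in> carrier H" "y \<in> topspace TY" for h y
    unfolding odo_act_def using phi_level_act[OF that] by simp
qed

lemma top_conjugate_TX: "top_conjugate G TX a (odo_space G Gs) (odo_act G)"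
proof -
  let ?F = "\<lambda>x n. \<theta> ` \<phi> (\<psi>' x) (n + N)"
  have "compact_space (odo_space H (\<lambda>n. Hs (n + N)))"
    using compact homeomorphic_compact_space[OF homeomorphic_map_imp_homeomorphic_space[OF shifted_phi_homeomorphic]]
    by simp
  then have image_homeomorphic: "homeomorphic_map (odo_space H (\<lambda>n. Hs (n + N))) (odo_space G Gs) (\<lambda>x n. \<theta> ` x n)"
    by (rule odo_image_homeomorphic_map[OF group_H fi_chain_shift[OF chain] _ theta_inj lcosets_Gs])
  have "homeomorphic_map TX TY \<psi>'" using psi homeomorphic_maps_sym homeomorphic_maps_map by blast
  then have "homeomorphic_map TX (odo_space G Gs) ?F"
    using homeomorphic_map_compose[OF homeomorphic_map_compose[OF _ shifted_phi_homeomorphic] image_homeomorphic]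
    by (simp add: o_def)
  moreover have "?F (a g x) = odo_act G g (?F x)" if g: "g \<in> carrier G" and x: "x \<in> topspace TX" for g x
  proof -
    have y: "\<psi>' x \<in> topspace TY" and x_eq: "\<psi> (\<psi>' x) = x"
      using psi x unfolding homeomorphic_maps_def continuous_map_def by auto
    obtain h where h: "h \<in> carrier H" "a g (\<psi> (\<psi>' x)) = \<psi> (b h (\<psi>' x))" using orbit_onto[OF y g] by blast
    have "\<psi>' (a g x) = b h (\<psi>' x)"
      using h(2) x_eq psi group_action_top_closed[OF action_H h(1) y] unfolding homeomorphic_maps_def by metis
    then show ?thesis
      unfolding odo_act_def using theta_level_act[OF y g h] by simp
  qed
  ultimately show ?thesis unfolding top_conjugate_def by blast
qed

lemma theta_iso: "\<theta> \<in> iso (H\<lparr>carrier := Hs N\<rparr>) (G\<lparr>carrier := Gs 0\<rparr>)"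
proof -
  have "bij_betw \<theta> (Hs N) (Gs 0)"
    by (rule bij_betw_imageI[OF inj_on_subset[OF theta_inj subgroup.subset[OF Hs_subgroup]]])
       (simp add: Gs_def)
  moreover have "\<theta> \<in> hom (H\<lparr>carrier := Hs N\<rparr>) (G\<lparr>carrier := Gs 0\<rparr>)"
  proof (rule homI)
    show "\<theta> x \<in> carrier (G\<lparr>carrier := Gs 0\<rparr>)" if "x \<in> carrier (H\<lparr>carrier := Hs N\<rparr>)" for x
      using that unfolding Gs_def by simp
    show "\<theta> (x \<otimes>\<^bsub>H\<lparr>carrier := Hs N\<rparr>\<^esub> y) = \<theta> x \<otimes>\<^bsub>G\<lparr>carrier := Gs 0\<rparr>\<^esub> \<theta> y"
      if "x \<in> carrier (H\<lparr>carrier := Hs N\<rparr>)" "y \<in> carrier (H\<lparr>carrier := Hs N\<rparr>)" for x y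
      using theta_mult subgroup.mem_carrier[OF Hs_subgroup] that by simp
  qed
  ultimately show ?thesis unfolding Group.iso_def by simp
qed

lemma card_lcosets_Gs: "card (lcosets\<^bsub>G\<^esub> (Gs 0)) = card (lcosets\<^bsub>H\<^esub> (Hs N))"
proof -
  have "inj_on (\<lambda>C. \<theta> ` C) (lcosets\<^bsub>H\<^esub> (Hs N))"
  proof (rule inj_onI)
    fix C D assume C: "C \<in> lcosets\<^bsub>H\<^esub> (Hs N)" and D: "D \<in> lcosets\<^bsub>H\<^esub> (Hs N)"
      and eq: "\<theta> ` C = \<theta> ` D"
    show "C = D"
      using inj_on_image_eq_iff[OF theta_inj subgroup.lcosets_carrier[OF Hs_subgroup group_H C]
          subgroup.lcosets_carrier[OF Hs_subgroup group_H D]] eq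
      by blast
  qed
  then have "card ((\<lambda>C. \<theta> ` C) ` (lcosets\<^bsub>H\<^esub> (Hs (0 + N)))) = card (lcosets\<^bsub>H\<^esub> (Hs N))"
    by (simp add: card_image)
  then show ?thesis by (simp only: lcosets_Gs)
qed

lemma struct_conjugate_odo: "struct_conjugate G (odo_space G Gs) (odo_act G) H TY b"
  unfolding struct_conjugate_def
proof (intro exI[of _ Gs] exI[of _ "\<lambda>n. Hs (n + N)"] exI[of _ \<theta>] conjI)
  show "determines G Gs (odo_space G Gs) (odo_act G)" by (rule determines_odo[OF fi_chain_Gs])
  show "determines H (\<lambda>n. Hs (n + N)) TY b" by (rule determines_TY)
  show "\<theta> \<in> iso (H\<lparr>carrier := Hs (0 + N)\<rparr>) (G\<lparr>carrier := Gs 0\<rparr>)" using theta_iso by simp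
  show "\<forall>n. \<theta> ` Hs (n + N) = Gs n" unfolding Gs_def by simp
  show "finite (lcosets\<^bsub>G\<^esub> (Gs 0))" using fi_chain_Gs unfolding fi_chain_def by blast
  show "card (lcosets\<^bsub>G\<^esub> (Gs 0)) = card (lcosets\<^bsub>H\<^esub> (Hs (0 + N)))" using card_lcosets_Gs by simp
qed

end

lemma cont_orbit_equiv_odometer_exists:
  assumes "finitely_generated H"
    and "group_action_top H TY b" and "free_action H TY b" and "is_odometer H TY b"
    and "group_action_top G TX a" and "free_action G TX a" and "cantor_space TX"
    and "cont_orbit_equiv G TX a H TY b"
  shows "\<exists>\<psi> \<psi>' Hs \<phi>. cont_orbit_equiv_odometer G TX a H TY b \<psi> \<psi>' Hs \<phi>"
proof -
  obtain Hs \<phi> where Hs: "fi_chain H Hs" "homeomorphic_map TY (odo_space H Hs) \<phi>"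
      "\<forall>h\<in>carrier H. \<forall>y\<in>topspace TY. \<phi> (b h y) = odo_act H h (\<phi> y)"
    using assms(4) unfolding is_odometer_def determines_def top_conjugate_def by blast
  obtain \<psi> \<psi>' where \<psi>: "homeomorphic_maps TX TY \<psi> \<psi>'"
      "\<forall>x\<in>topspace TX. \<psi> ` orbit_of G a x = orbit_of H b (\<psi> x)"
      "\<forall>y\<in>topspace TY. \<forall>h\<in>carrier H. \<exists>g\<in>carrier G. \<exists>V. openin TY V \<and> closedin TY V \<and> y \<in> V
         \<and> (\<forall>w\<in>V. \<psi>' (b h w) = a g (\<psi>' w))"
    using assms(8) unfolding cont_orbit_equiv_def by blast
  have compact: "compact_space TY"
    using homeomorphic_compact_space[OF homeomorphic_maps_imp_homeomorphic_space[OF \<psi>(1)]]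
      cantor_space_compact[OF assms(7)] by simp
  have "cont_orbit_equiv_odometer G TX a H TY b \<psi>' \<psi> Hs \<phi>"
  proof unfold_locales
    show "\<psi>' \<in> topspace TY \<rightarrow> topspace TX"
      using \<psi>(1) unfolding homeomorphic_maps_def continuous_map_def by blast
    show "\<exists>g\<in>carrier G. \<psi>' (b h y) = a g (\<psi>' y)" if "y \<in> topspace TY" "h \<in> carrier H" for y h
      by (rule orbit_equiv_cocycle_exists(1)[OF \<psi>(1) assms(5) \<psi>(2) that])
    show "\<exists>h\<in>carrier H. a g (\<psi>' y) = \<psi>' (b h y)" if "y \<in> topspace TY" "g \<in> carrier G" for y g
      by (rule orbit_equiv_cocycle_exists(2)[OF \<psi>(1) assms(5) \<psi>(2) that])
    show "homeomorphic_maps TY TX \<psi>' \<psi>" by (rule homeomorphic_maps_sym[THEN iffD1, OF \<psi>(1)])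
    show "\<exists>g\<in>carrier G. \<exists>V. openin TY V \<and> y \<in> V \<and> (\<forall>w\<in>V. \<psi>' (b h w) = a g (\<psi>' w))"
      if "y \<in> topspace TY" "h \<in> carrier H" for y h
      using \<psi>(3)[rule_format, OF that] by blast
    show "\<phi> (b h y) = odo_act H h (\<phi> y)" if "h \<in> carrier H" "y \<in> topspace TY" for h y
      using Hs(3)[rule_format, OF that] .
  qed (fact assms(1,2,3,5,6) Hs(1,2) compact)+
  then show ?thesis by blast
qed

theorem theorem3p3:
  fixes G :: "('g,'b) monoid_scheme" and H :: "('h,'c) monoid_scheme"
    and TX :: "'x topology" and a :: "'g \<Rightarrow> 'x \<Rightarrow> 'x"
    and TY :: "'y topology" and b :: "'h \<Rightarrow> 'y \<Rightarrow> 'y"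
  assumes "group G" and "countable (carrier G)"
    and "group H" and "finitely_generated H" and "residually_finite H"
    and "group_action_top H TY b" and "free_action H TY b" and "is_odometer H TY b"
    and "group_action_top G TX a" and "free_action G TX a" and "cantor_space TX"
    and "cont_orbit_equiv G TX a H TY b"
  shows "(\<exists>Gs. fi_chain G Gs
            \<and> free_action G (odo_space G Gs) (odo_act G)
            \<and> top_conjugate G TX a (odo_space G Gs) (odo_act G)
            \<and> struct_conjugate G (odo_space G Gs) (odo_act G) H TY b)
       \<and> (\<exists>G0 H0. subgroup G0 G \<and> subgroup H0 H \<and> finite (lcosets\<^bsub>G\<^esub> G0)
            \<and> card (lcosets\<^bsub>G\<^esub> G0) = card (lcosets\<^bsub>H\<^esub> H0)
            \<and> G\<lparr>carrier := G0\<rparr> \<cong> H\<lparr>carrier := H0\<rparr>)"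
proof -
  obtain \<psi> \<psi>' Hs \<phi> where "cont_orbit_equiv_odometer G TX a H TY b \<psi> \<psi>' Hs \<phi>"
    using cont_orbit_equiv_odometer_exists[OF assms(4,6-12)] by blast
  then interpret cont_orbit_equiv_odometer G TX a H TY b \<psi> \<psi>' Hs \<phi> .
  have "G\<lparr>carrier := Gs 0\<rparr> \<cong> H\<lparr>carrier := Hs N\<rparr>"
    using theta_iso group.iso_sym[OF subgroup.subgroup_is_group[OF Hs_subgroup group_H]]
    unfolding is_iso_def by blast
  then show ?thesis
    using fi_chain_Gs free_action_top_conjugate[OF action_G free_G top_conjugate_TX]
      top_conjugate_TX struct_conjugate_odo Hs_subgroup card_lcosets_Gs fi_chain_Gs[unfolded fi_chain_def]
    by blast
qed

end
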